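(* For every integer $r\ge1$, let $\mathcal{REP}_r$ be the category of finite-dimensional modules over the polynomial algebra $\Bbbk[x_1,\dots,x_r]$. Then $\mathrm{fpdim}(\mathcal{REP}_r)=r$.
   Context: $\Bbbk$ is algebraically closed. For a $\Bbbk$-linear abelian category $\mathcal C$: a brick is an object $M$ with $\mathrm{Hom}_{\mathcal C}(M,M)=\Bbbk$; a brick set is a finite set $\phi=\{X_1,\dots,X_n\}$ of bricks with $\dim\mathrm{Hom}_{\mathcal C}(X_i,X_j)=\delta_{ij}$; its adjacency matrix is $C(\phi)=(\dim\mathrm{Ext}^1_{\mathcal C}(X_i,X_j))_{i,j}$; $\mathrm{fpdim}(\mathcal C)=\sup\{\rho(C(\phi)):\phi\text{ a brick set}\}$, $\rho$ the spectral radius. *)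

theory Defs
  imports "Jordan_Normal_Form.Spectral_Radius" "HOL-Library.Extended_Real" "HOL-Library.Function_Algebras"
begin

text \<open>Matrices over the field 'k are encoded as functions nat \<Rightarrow> nat \<Rightarrow> 'k
  (entries outside the relevant range are 0); this type is a 'k-vector space
  under pointwise operations, so subspace dimensions can be taken with
  the library notion vector_space.dim.\<close>

definition mscale :: "'k::field \<Rightarrow> (nat \<Rightarrow> nat \<Rightarrow> 'k) \<Rightarrow> (nat \<Rightarrow> nat \<Rightarrow> 'k)" where
  "mscale c A = (\<lambda>i j. c * A i j)"

definition tscale :: "'k::field \<Rightarrow> (nat \<Rightarrow> nat \<Rightarrow> nat \<Rightarrow> 'k) \<Rightarrow> (nat \<Rightarrow> nat \<Rightarrow> nat \<Rightarrow> 'k)" where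
  "tscale c F = (\<lambda>l i j. c * F l i j)"

definition mmul :: "nat \<Rightarrow> (nat \<Rightarrow> nat \<Rightarrow> 'k::field) \<Rightarrow> (nat \<Rightarrow> nat \<Rightarrow> 'k) \<Rightarrow> nat \<Rightarrow> nat \<Rightarrow> 'k" where
  "mmul d A B = (\<lambda>i j. \<Sum>k<d. A i k * B k j)"

text \<open>A finite-dimensional module over k[x_0,...,x_(r-1)]: a dimension d and
  r pairwise commuting d\<times>d matrices X l (action of x_l), l < r.\<close>
type_synonym 'k rep = "nat \<times> (nat \<Rightarrow> nat \<Rightarrow> nat \<Rightarrow> 'k)"

definition is_rep :: "nat \<Rightarrow> 'k::field rep \<Rightarrow> bool" where
  "is_rep r M = (case M of (d, X) \<Rightarrow>
     (\<forall>l i j. (l \<ge> r \<or> i \<ge> d \<or> j \<ge> d) \<longrightarrow> X l i j = 0) \<and>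
     (\<forall>l<r. \<forall>l'<r. \<forall>i<d. \<forall>j<d. mmul d (X l) (X l') i j = mmul d (X l') (X l) i j))"

definition hom_space :: "nat \<Rightarrow> 'k::field rep \<Rightarrow> 'k rep \<Rightarrow> (nat \<Rightarrow> nat \<Rightarrow> 'k) set" where
  "hom_space r M N = (case M of (dM, XM) \<Rightarrow> case N of (dN, XN) \<Rightarrow>
     {T. (\<forall>a b. (a \<ge> dN \<or> b \<ge> dM) \<longrightarrow> T a b = 0) \<and>
         (\<forall>l<r. \<forall>a<dN. \<forall>b<dM. mmul dM T (XM l) a b = mmul dN (XN l) T a b)})"

definition hom_dim :: "nat \<Rightarrow> 'k::field rep \<Rightarrow> 'k rep \<Rightarrow> nat" where
  "hom_dim r M N = vector_space.dim mscale (hom_space r M N)"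

text \<open>Ext^1(M,N) = classes of extensions 0 \<rightarrow> N \<rightarrow> E \<rightarrow> M \<rightarrow> 0.  Such an E is N \<oplus> M with
  x_l acting by the block matrix [[X^N_l, F_l],[0, X^M_l]]; these commute iff F is
  in ext_cocycles, and two such extensions are equivalent iff their difference
  is in ext_coboundaries (F_l = X^N_l g - g X^M_l, the equivalence being
  [[1,g],[0,1]]).  Hence Ext^1(M,N) = Z/B.\<close>
definition ext_cocycles :: "nat \<Rightarrow> 'k::field rep \<Rightarrow> 'k rep \<Rightarrow> (nat \<Rightarrow> nat \<Rightarrow> nat \<Rightarrow> 'k) set" where
  "ext_cocycles r M N = (case M of (dM, XM) \<Rightarrow> case N of (dN, XN) \<Rightarrow>
     {F. (\<forall>l a b. (l \<ge> r \<or> a \<ge> dN \<or> b \<ge> dM) \<longrightarrow> F l a b = 0) \<and>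
         (\<forall>l<r. \<forall>l'<r. \<forall>a<dN. \<forall>b<dM.
            mmul dN (XN l) (F l') a b + mmul dM (F l) (XM l') a b =
            mmul dN (XN l') (F l) a b + mmul dM (F l') (XM l) a b)})"

definition ext_coboundaries :: "nat \<Rightarrow> 'k::field rep \<Rightarrow> 'k rep \<Rightarrow> (nat \<Rightarrow> nat \<Rightarrow> nat \<Rightarrow> 'k) set" where
  "ext_coboundaries r M N = (case M of (dM, XM) \<Rightarrow> case N of (dN, XN) \<Rightarrow>
     {F. \<exists>g. (\<forall>a b. (a \<ge> dN \<or> b \<ge> dM) \<longrightarrow> g a b = 0) \<and>
         (\<forall>l a b. F l a b = (if l < r \<and> a < dN \<and> b < dM
                               then mmul dN (XN l) g a b - mmul dM g (XM l) a b else 0))})"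

definition ext1_dim :: "nat \<Rightarrow> 'k::field rep \<Rightarrow> 'k rep \<Rightarrow> nat" where
  "ext1_dim r M N = vector_space.dim tscale (ext_cocycles r M N)
                    - vector_space.dim tscale (ext_coboundaries r M N)"

definition brick :: "nat \<Rightarrow> 'k::field rep \<Rightarrow> bool" where
  "brick r M = (is_rep r M \<and> hom_dim r M M = 1)"

definition brick_set :: "nat \<Rightarrow> 'k::field rep list \<Rightarrow> bool" where
  "brick_set r \<phi> = ((\<forall>M \<in> set \<phi>. brick r M) \<and>
     (\<forall>i<length \<phi>. \<forall>j<length \<phi>. i \<noteq> j \<longrightarrow> hom_dim r (\<phi> ! i) (\<phi> ! j) = 0))"

definition adj_matrix :: "nat \<Rightarrow> 'k::field rep list \<Rightarrow> complex mat" where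
  "adj_matrix r \<phi> = mat (length \<phi>) (length \<phi>)
     (\<lambda>(i, j). of_nat (ext1_dim r (\<phi> ! i) (\<phi> ! j)))"

definition fpdim_REP :: "'k::field itself \<Rightarrow> nat \<Rightarrow> ereal" where
  "fpdim_REP _ r = (SUP \<phi> \<in> {\<phi> :: 'k rep list. brick_set r \<phi> \<and> \<phi> \<noteq> []}.
                       ereal (spectral_radius (adj_matrix r \<phi>)))"

end

theory Submission
  imports Defs
begin

text \<open>Each x_l acts on a module M by an endomorphism, and so do the scalars. If M is a brick,
  End(M) is the line of scalars, so every x_l acts by a scalar; but then every matrix is an
  endomorphism, which forces dim M = 1. So a brick is the one-dimensional module S_p at a point p
  of k^r, and distinct members of a brick set sit at distinct points. For S_p and S_q a 1-cocycle
  is a family F with (q - p)_l F_l' = (q - p)_l' F_l, and the coboundaries are the multiples of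
  q - p; hence Ext^1(S_p, S_q) is 0 for p \<noteq> q and k^r for p = q. The adjacency matrix of every
  brick set is therefore r times the identity.\<close>

interpretation matrix_vs: vector_space "mscale :: 'k::field \<Rightarrow> _"
  by unfold_locales (simp_all add: mscale_def fun_eq_iff algebra_simps)

interpretation family_vs: vector_space "tscale :: 'k::field \<Rightarrow> _"
  by unfold_locales (simp_all add: tscale_def fun_eq_iff algebra_simps)

lemma (in vector_space) dim_subset_zero: "S \<subseteq> {0} \<Longrightarrow> dim S = 0"
  by (rule dim_unique[of "{}"]) (auto simp: independent_empty)

lemma (in vector_space) dim_one_subset_span_singleton:
  assumes "dim S = 1" and "v \<in> S" and "v \<noteq> 0"
  shows "S \<subseteq> span {v}"
proof -
  obtain B where B: "S \<subseteq> span B" "card B = dim S"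
    using basis_exists by blast
  with assms(1) have "card B = 1"
    by simp
  then obtain w where "B = {w}"
    by (rule card_1_singletonE)
  with B(1) have S_line: "S \<subseteq> range (\<lambda>k. scale k w)"
    by (simp add: span_singleton)
  then obtain c where v: "v = scale c w"
    using assms(2) by blast
  with assms(3) have "c \<noteq> 0"
    by auto
  with v have w: "w = scale (inverse c) v"
    by simp
  show ?thesis
  proof
    fix x assume "x \<in> S"
    then obtain k where "x = scale k w"
      using S_line by blast
    then have "x = scale (k * inverse c) v"
      by (simp add: w)
    then show "x \<in> span {v}"
      by (simp add: span_scale span_base)
  qed
qed

subsection \<open>Bricks are one-dimensional\<close>

definition idmat :: "nat \<Rightarrow> nat \<Rightarrow> nat \<Rightarrow> 'k::field" where
  "idmat d = (\<lambda>a b. if a < d \<and> a = b then 1 else 0)"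

definition unitmat :: "nat \<Rightarrow> nat \<Rightarrow> nat \<Rightarrow> nat \<Rightarrow> 'k::field" where
  "unitmat i j = (\<lambda>a b. if a = i \<and> b = j then 1 else 0)"

lemma mmul_scalar_left:
  assumes "a < d"
  shows "mmul d (mscale c (idmat d)) B a b = c * (B a b :: 'k::field)"
proof -
  have "mmul d (mscale c (idmat d)) B a b = (\<Sum>k<d. if k = a then c * B a b else 0)"
    unfolding mmul_def mscale_def idmat_def by (intro sum.cong) auto
  then show ?thesis
    using assms by simp
qed

lemma mmul_scalar_right:
  assumes "b < d"
  shows "mmul d A (mscale c (idmat d)) a b = c * (A a b :: 'k::field)"
proof -
  have "mmul d A (mscale c (idmat d)) a b = (\<Sum>k<d. if k = b then c * A a b else 0)"
    unfolding mmul_def mscale_def idmat_def by (intro sum.cong) auto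
  then show ?thesis
    using assms by simp
qed

lemma scalar_in_hom_space: "mscale c (idmat d) \<in> hom_space r (d, X) (d, X)"
  by (auto simp: hom_space_def mmul_scalar_left mmul_scalar_right) (auto simp: mscale_def idmat_def)

lemma action_in_hom_space:
  "is_rep r (d, X) \<Longrightarrow> l < r \<Longrightarrow> X l \<in> hom_space r (d, X) (d, X)"
  by (auto simp: is_rep_def hom_space_def)

lemma hom_space_of_scalar_action:
  assumes "\<forall>l<r. \<exists>c. X l = mscale c (idmat d)"
    and "\<forall>a b. d \<le> a \<or> d \<le> b \<longrightarrow> T a b = 0"
  shows "T \<in> hom_space r (d, X) (d, X)"
  using assms by (auto simp: hom_space_def mmul_scalar_left mmul_scalar_right mult.commute)

lemma brick_dim_pos:
  assumes "brick r (d, X)"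
  shows "0 < d"
proof (rule ccontr)
  assume "\<not> 0 < d"
  then have "hom_space r (d, X) (d, X) \<subseteq> {0}"
    by (auto simp: hom_space_def fun_eq_iff)
  then have "hom_dim r (d, X) (d, X) = 0"
    unfolding hom_dim_def by (rule matrix_vs.dim_subset_zero)
  with assms show False
    by (simp add: brick_def)
qed

lemma brick_dim_eq_1:
  assumes brick: "brick r (d, X :: nat \<Rightarrow> nat \<Rightarrow> nat \<Rightarrow> 'k::field)"
  shows "d = 1"
proof (rule ccontr)
  assume "d \<noteq> 1"
  with brick_dim_pos[OF brick] have "2 \<le> d"
    by linarith
  let ?End = "hom_space r (d, X) (d, X)"
  have "idmat d \<noteq> (0 :: nat \<Rightarrow> nat \<Rightarrow> 'k)"
  proof
    assume "idmat d = (0 :: nat \<Rightarrow> nat \<Rightarrow> 'k)"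
    then have "idmat d 0 0 = (0 :: 'k)"
      by simp
    with \<open>2 \<le> d\<close> show False
      by (simp add: idmat_def)
  qed
  moreover have "idmat d \<in> ?End"
    using scalar_in_hom_space[of 1 d r X] by simp
  ultimately have End_line: "?End \<subseteq> range (\<lambda>c. mscale c (idmat d))"
    using brick matrix_vs.dim_one_subset_span_singleton[of ?End]
    by (simp add: brick_def hom_dim_def matrix_vs.span_singleton)
  have "\<forall>l<r. \<exists>c. X l = mscale c (idmat d)"
    using action_in_hom_space brick End_line by (fastforce simp: brick_def)
  then have "unitmat 0 1 \<in> ?End"
    using \<open>2 \<le> d\<close> by (intro hom_space_of_scalar_action) (simp_all add: unitmat_def)
  then obtain c :: 'k where "unitmat 0 1 = mscale c (idmat d)"
    using End_line by blast
  then have "unitmat 0 1 0 1 = mscale c (idmat d) 0 (1 :: nat)"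
    by simp
  then show False
    by (simp add: unitmat_def mscale_def idmat_def)
qed

text \<open>Stated for Suc 0 because the simplifier normalises 1 :: nat to Suc 0 first.\<close>

lemma mmul_1 [simp]: "mmul (Suc 0) A B a b = A a 0 * (B 0 b :: 'k::field)"
  by (simp add: mmul_def)

lemma rep_1_eqI:
  assumes "is_rep r (1, X)" and "is_rep r (1, Y)" and "\<forall>l<r. X l 0 0 = Y l 0 0"
  shows "X = Y"
proof (intro ext)
  fix l a b :: nat
  have "\<forall>l a b. r \<le> l \<or> 1 \<le> a \<or> 1 \<le> b \<longrightarrow> X l a b = 0"
    and "\<forall>l a b. r \<le> l \<or> 1 \<le> a \<or> 1 \<le> b \<longrightarrow> Y l a b = 0"
    using assms(1,2) by (simp_all add: is_rep_def)
  moreover have "l < r \<and> a = 0 \<and> b = 0 \<or> r \<le> l \<or> 1 \<le> a \<or> 1 \<le> b"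
    by presburger
  ultimately show "X l a b = Y l a b"
    using assms(3) by metis
qed

lemma brick_if_rep_1:
  assumes "is_rep r (1, X :: nat \<Rightarrow> nat \<Rightarrow> nat \<Rightarrow> 'k::field)"
  shows "brick r (1, X)"
proof -
  have "hom_space r (1, X) (1, X) = matrix_vs.span {unitmat 0 0 :: nat \<Rightarrow> nat \<Rightarrow> 'k}"
    by (auto simp: hom_space_def matrix_vs.span_singleton mscale_def unitmat_def fun_eq_iff
        mult.commute)
  moreover have "unitmat 0 0 \<noteq> (0 :: nat \<Rightarrow> nat \<Rightarrow> 'k)"
    by (auto simp: unitmat_def fun_eq_iff)
  ultimately show ?thesis
    using assms by (simp add: brick_def hom_dim_def matrix_vs.dim_eq_card_independent)
qed

lemma brick_cases:
  assumes "brick r M"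
  obtains X where "M = (1, X)" and "is_rep r (1, X)"
  using assms brick_dim_eq_1 by (cases M) (auto simp: brick_def)

subsection \<open>Extensions between one-dimensional modules\<close>

lemma ext_cocycles_1:
  "ext_cocycles r (1, X) (1, Y) =
     {F. (\<forall>l a b. r \<le> l \<or> 1 \<le> a \<or> 1 \<le> b \<longrightarrow> F l a b = 0) \<and>
         (\<forall>l<r. \<forall>l'<r. (Y l 0 0 - X l 0 0) * F l' 0 0 = (Y l' 0 0 - X l' 0 0) * F l 0 0)}"
  by (auto simp: ext_cocycles_def algebra_simps)

lemma ext_coboundaries_1:
  "ext_coboundaries r (1, X) (1, Y) =
     {F. \<exists>c. \<forall>l a b. F l a b = (if l < r \<and> a = 0 \<and> b = 0 then (Y l 0 0 - X l 0 0) * c else 0)}"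
  (is "_ = ?coboundaries")
proof (intro equalityI subsetI)
  fix F assume "F \<in> ext_coboundaries r (1, X) (1, Y)"
  then obtain g where "\<forall>l a b. F l a b =
      (if l < r \<and> a < 1 \<and> b < 1 then mmul 1 (Y l) g a b - mmul 1 g (X l) a b else 0)"
    unfolding ext_coboundaries_def prod.case by blast
  then have "\<forall>l a b. F l a b = (if l < r \<and> a = 0 \<and> b = 0 then (Y l 0 0 - X l 0 0) * g 0 0 else 0)"
    by (auto simp: algebra_simps)
  then show "F \<in> ?coboundaries"
    by blast
next
  fix F assume "F \<in> ?coboundaries"
  then obtain c where F: "\<forall>l a b. F l a b =
      (if l < r \<and> a = 0 \<and> b = 0 then (Y l 0 0 - X l 0 0) * c else 0)"
    by blast
  show "F \<in> ext_coboundaries r (1, X) (1, Y)"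
    unfolding ext_coboundaries_def
    using F by (auto intro!: exI[of _ "\<lambda>a b. if a = 0 \<and> b = 0 then c else 0"] simp: algebra_simps)
qed

definition unit_family :: "nat \<Rightarrow> nat \<Rightarrow> nat \<Rightarrow> nat \<Rightarrow> 'k::field" where
  "unit_family l = (\<lambda>l' a b. if l' = l \<and> a = 0 \<and> b = 0 then 1 else 0)"

definition families_at_origin :: "nat \<Rightarrow> (nat \<Rightarrow> nat \<Rightarrow> nat \<Rightarrow> 'k::field) set" where
  "families_at_origin r = {F. \<forall>l a b. r \<le> l \<or> 1 \<le> a \<or> 1 \<le> b \<longrightarrow> F l a b = 0}"

lemma span_unit_families:
  "family_vs.span (unit_family ` {..<r}) = (families_at_origin r :: (nat \<Rightarrow> nat \<Rightarrow> nat \<Rightarrow> 'k::field) set)"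
proof (induction r)
  case 0
  show ?case
    by (auto simp: families_at_origin_def fun_eq_iff)
next
  case (Suc r)
  have "F \<in> families_at_origin (Suc r) \<longleftrightarrow>
        (\<exists>k. F - tscale k (unit_family r) \<in> families_at_origin r)" for F :: "nat \<Rightarrow> nat \<Rightarrow> nat \<Rightarrow> 'k"
  proof
    assume "F \<in> families_at_origin (Suc r)"
    then show "\<exists>k. F - tscale k (unit_family r) \<in> families_at_origin r"
      by (intro exI[of _ "F r 0 0"]) (auto simp: families_at_origin_def tscale_def unit_family_def)
  next
    assume "\<exists>k. F - tscale k (unit_family r) \<in> families_at_origin r"
    then show "F \<in> families_at_origin (Suc r)"
      by (auto simp: families_at_origin_def tscale_def unit_family_def)
  qed
  then show ?case
    by (auto simp: lessThan_Suc family_vs.span_breakdown_eq Suc.IH)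
qed

lemma independent_unit_families:
  "family_vs.independent (unit_family ` {..<r} :: (nat \<Rightarrow> nat \<Rightarrow> nat \<Rightarrow> 'k::field) set)"
proof (induction r)
  case (Suc r)
  have "unit_family r \<notin> families_at_origin r"
    by (auto simp: families_at_origin_def unit_family_def)
  then show ?case
    unfolding lessThan_Suc image_insert
    by (intro family_vs.independent_insertI) (simp_all add: span_unit_families Suc.IH)
qed (simp add: family_vs.independent_empty)

lemma dim_families_at_origin:
  "family_vs.dim (families_at_origin r :: (nat \<Rightarrow> nat \<Rightarrow> nat \<Rightarrow> 'k::field) set) = r"
proof -
  have "inj (unit_family :: nat \<Rightarrow> nat \<Rightarrow> nat \<Rightarrow> nat \<Rightarrow> 'k)"
  proof (rule injI)
    fix l l' :: nat
    assume "unit_family l = (unit_family l' :: nat \<Rightarrow> nat \<Rightarrow> nat \<Rightarrow> 'k)"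
    then have "unit_family l l 0 0 = (unit_family l' l 0 0 :: 'k)"
      by simp
    then show "l = l'"
      by (simp add: unit_family_def split: if_splits)
  qed
  then have "card (unit_family ` {..<r} :: (nat \<Rightarrow> nat \<Rightarrow> nat \<Rightarrow> 'k) set) = r"
    by (simp add: card_image inj_on_subset)
  then show ?thesis
    unfolding span_unit_families[symmetric]
    by (simp add: family_vs.dim_eq_card_independent[OF independent_unit_families])
qed

lemma ext1_dim_self: "ext1_dim r (1, X) (1, X) = r"
proof -
  have "ext_cocycles r (1, X) (1, X) = families_at_origin r"
    unfolding ext_cocycles_1 families_at_origin_def by simp
  moreover have "ext_coboundaries r (1, X) (1, X) \<subseteq> {0}"
    unfolding ext_coboundaries_1 diff_self mult_zero_left if_cancel by (auto simp: fun_eq_iff)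
  ultimately show ?thesis
    by (simp add: ext1_dim_def dim_families_at_origin family_vs.dim_subset_zero)
qed

lemma ext_coboundaries_subset_cocycles_1:
  "ext_coboundaries r (1, X) (1, Y) \<subseteq> ext_cocycles r (1, X) (1, Y)"
proof
  fix F assume "F \<in> ext_coboundaries r (1, X) (1, Y)"
  then obtain c where
    "\<forall>l a b. F l a b = (if l < r \<and> a = 0 \<and> b = 0 then (Y l 0 0 - X l 0 0) * c else 0)"
    unfolding ext_coboundaries_1 by blast
  then show "F \<in> ext_cocycles r (1, X) (1, Y)"
    unfolding ext_cocycles_1 by (simp add: algebra_simps)
qed

lemma ext_cocycles_subset_coboundaries_1:
  assumes "l0 < r" and "X l0 0 0 \<noteq> Y l0 0 0"
  shows "ext_cocycles r (1, X) (1, Y) \<subseteq> ext_coboundaries r (1, X) (1, Y)"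
proof
  define \<delta> where "\<delta> l = Y l 0 0 - X l 0 0" for l
  have "\<delta> l0 \<noteq> 0"
    using assms(2) by (simp add: \<delta>_def)
  fix F assume F: "F \<in> ext_cocycles r (1, X) (1, Y)"
  have supp: "\<forall>l a b. r \<le> l \<or> 1 \<le> a \<or> 1 \<le> b \<longrightarrow> F l a b = 0"
    using F unfolding ext_cocycles_1 mem_Collect_eq by (rule conjunct1)
  have cocycle: "\<forall>l<r. \<forall>l'<r. \<delta> l * F l' 0 0 = \<delta> l' * F l 0 0"
    using F unfolding ext_cocycles_1 \<delta>_def mem_Collect_eq by (rule conjunct2)
  define c where "c = F l0 0 0 / \<delta> l0"
  have proportional: "F l a b = (if l < r \<and> a = 0 \<and> b = 0 then \<delta> l * c else 0)" for l a b
  proof (cases "l < r \<and> a = 0 \<and> b = 0")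
    case True
    then have "F l 0 0 * \<delta> l0 = \<delta> l * F l0 0 0"
      using cocycle assms(1) by (metis mult.commute)
    then have "F l 0 0 = \<delta> l * c"
      using \<open>\<delta> l0 \<noteq> 0\<close> unfolding c_def by (simp add: eq_divide_eq)
    with True show ?thesis
      by simp
  next
    case False
    then have "r \<le> l \<or> 1 \<le> a \<or> 1 \<le> b"
      by auto
    then have "F l a b = 0"
      using supp by blast
    then show ?thesis
      unfolding if_not_P[OF False] .
  qed
  show "F \<in> ext_coboundaries r (1, X) (1, Y)"
    unfolding ext_coboundaries_1
    by (intro CollectI exI[of _ c] allI) (simp only: proportional \<delta>_def)
qed

lemma ext1_dim_distinct:
  assumes "l0 < r" and "X l0 0 0 \<noteq> Y l0 0 0"
  shows "ext1_dim r (1, X) (1, Y) = 0"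
proof -
  have "ext_cocycles r (1, X) (1, Y) = ext_coboundaries r (1, X) (1, Y)"
    using ext_cocycles_subset_coboundaries_1[of l0 r X Y, OF assms]
      ext_coboundaries_subset_cocycles_1 by (rule subset_antisym)
  then show ?thesis
    by (simp add: ext1_dim_def)
qed

lemma adj_matrix_brick_set:
  assumes bs: "brick_set r (\<phi> :: 'k::field rep list)"
  shows "adj_matrix r \<phi> = of_nat r \<cdot>\<^sub>m 1\<^sub>m (length \<phi>)"
proof (rule eq_matI)
  fix i j assume "i < dim_row (of_nat r \<cdot>\<^sub>m 1\<^sub>m (length \<phi>) :: complex mat)"
    and "j < dim_col (of_nat r \<cdot>\<^sub>m 1\<^sub>m (length \<phi>) :: complex mat)"
  then have i: "i < length \<phi>" and j: "j < length \<phi>"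
    by auto
  have bi: "brick r (\<phi> ! i)" and bj: "brick r (\<phi> ! j)"
    using bs i j nth_mem unfolding brick_set_def by blast+
  obtain X where X: "\<phi> ! i = (1, X)" "is_rep r (1, X)"
    using bi by (rule brick_cases)
  obtain Y where Y: "\<phi> ! j = (1, Y)" "is_rep r (1, Y)"
    using bj by (rule brick_cases)
  have "ext1_dim r (\<phi> ! i) (\<phi> ! j) = (if i = j then r else 0)"
  proof (cases "i = j")
    case True
    then show ?thesis
      using ext1_dim_self[of r X] X(1) by simp
  next
    case False
    then have "hom_dim r (\<phi> ! i) (\<phi> ! j) = 0"
      using bs i j unfolding brick_set_def by blast
    with bi have "\<phi> ! i \<noteq> \<phi> ! j"
      by (auto simp: brick_def)
    with X(1) Y(1) have "X \<noteq> Y"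
      by auto
    then obtain l0 where "l0 < r" and "X l0 0 0 \<noteq> Y l0 0 0"
      using rep_1_eqI[OF X(2) Y(2)] by blast
    then show ?thesis
      using ext1_dim_distinct[of l0 r X Y] X(1) Y(1) False by simp
  qed
  then show "adj_matrix r \<phi> $$ (i, j) = (of_nat r \<cdot>\<^sub>m 1\<^sub>m (length \<phi>)) $$ (i, j)"
    using i j by (simp add: adj_matrix_def)
qed (simp_all add: adj_matrix_def)

lemma spectrum_smult_one_mat:
  assumes "0 < n"
  shows "spectrum (c \<cdot>\<^sub>m 1\<^sub>m n) = {c :: 'a::idom}"
proof -
  have action: "(c \<cdot>\<^sub>m 1\<^sub>m n) *\<^sub>v v = c \<cdot>\<^sub>v v" if "v \<in> carrier_vec n" for v
    using that by (intro eq_vecI) auto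
  have "k = c" if "k \<in> spectrum (c \<cdot>\<^sub>m 1\<^sub>m n)" for k
  proof -
    from that obtain v where v: "v \<in> carrier_vec n" "v \<noteq> 0\<^sub>v n" "(c \<cdot>\<^sub>m 1\<^sub>m n) *\<^sub>v v = k \<cdot>\<^sub>v v"
      by (auto simp: spectrum_def eigenvalue_def eigenvector_def)
    with action have eigen: "c \<cdot>\<^sub>v v = k \<cdot>\<^sub>v v"
      by simp
    obtain i where "i < n" "v $ i \<noteq> 0"
      using v(1,2) by (metis carrier_vecD eq_vecI index_zero_vec(1,2))
    moreover have "c * v $ i = k * v $ i"
      using arg_cong[OF eigen, of "\<lambda>w. w $ i"] \<open>i < n\<close> v(1) by simp
    ultimately show "k = c"
      by simp
  qed
  moreover have "c \<in> spectrum (c \<cdot>\<^sub>m 1\<^sub>m n)"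
    unfolding spectrum_def eigenvalue_def eigenvector_def
    using assms by (intro CollectI exI[of _ "unit_vec n 0"]) (auto simp: action)
  ultimately show ?thesis
    by blast
qed

lemma spectral_radius_smult_one_mat:
  "0 < n \<Longrightarrow> spectral_radius (c \<cdot>\<^sub>m 1\<^sub>m n) = norm c"
  by (simp add: spectral_radius_def spectrum_smult_one_mat)

theorem corollary7p5:
  fixes r :: nat
  assumes "r \<ge> 1"
  shows "fpdim_REP TYPE('k::alg_closed_field) r = ereal (real r)"
  unfolding fpdim_REP_def
proof (rule SUP_eq_const)
  have "is_rep r (1, \<lambda>_ _ _. 0 :: 'k)"
    by (simp add: is_rep_def mmul_def)
  then have "brick r (1, \<lambda>_ _ _. 0 :: 'k)"
    by (rule brick_if_rep_1)
  then have "brick_set r [(1, \<lambda>_ _ _. 0 :: 'k)]"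
    by (simp add: brick_set_def)
  then show "{\<phi> :: 'k rep list. brick_set r \<phi> \<and> \<phi> \<noteq> []} \<noteq> {}"
    by blast
next
  fix \<phi> :: "'k rep list"
  assume "\<phi> \<in> {\<phi>. brick_set r \<phi> \<and> \<phi> \<noteq> []}"
  then show "ereal (spectral_radius (adj_matrix r \<phi>)) = ereal (real r)"
    by (simp add: adj_matrix_brick_set spectral_radius_smult_one_mat)
qed

end
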